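(* For $p\in(0,1)$ and $N\ge2$, $\bar A_p\ge\min(1,c(p))$, where $$U(p):=\min_{r\in[2,\infty)}\frac{1}{r\,\bigl|\log\bigl(1-(1-p)^{r-1}\bigr)\bigr|},\qquad c(p):=\min_{w\in[0,\infty)}\bigl(U(p)\,w+(1-p)e^{-w}\bigr).$$
   Context: $\log$ is the natural logarithm, $q:=1-p$, $0^0=1$. $\bar A_p:=\min_{\vec m\in\{0,1,\dots,N\}^N}A_p(\vec m)$ where $A_p(\vec m):=\sum_{i=1}^N m_i/i+q\,0^{m_1}\exp(-\sum_{i=2}^N m_i a^i_p)$ and $a^i_p:=|\log(1-(1-p)^{i-1})|$. *)

theory Defs
  imports Complex_Main
begin

definition a_coef :: "real \<Rightarrow> nat \<Rightarrow> real" where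
  "a_coef p i = \<bar>ln (1 - (1 - p) ^ (i - 1))\<bar>"

definition A_fun :: "real \<Rightarrow> nat \<Rightarrow> (nat \<Rightarrow> nat) \<Rightarrow> real" where
  "A_fun p N m = (\<Sum>i=1..N. real (m i) / real i)
     + (1 - p) * (0::real) ^ (m 1) * exp (- (\<Sum>i=2..N. real (m i) * a_coef p i))"

definition admissible :: "nat \<Rightarrow> (nat \<Rightarrow> nat) set" where
  "admissible N = {m. (\<forall>i\<in>{1..N}. m i \<le> N) \<and> (\<forall>i. i \<notin> {1..N} \<longrightarrow> m i = 0)}"

definition A_bar :: "real \<Rightarrow> nat \<Rightarrow> real" where
  "A_bar p N = Min (A_fun p N ` admissible N)"

definition U_fun :: "real \<Rightarrow> real" where
  "U_fun p = (INF r\<in>{2..}. 1 / (r * \<bar>ln (1 - (1 - p) powr (r - 1))\<bar>))"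

definition c_fun :: "real \<Rightarrow> real" where
  "c_fun p = (INF w\<in>{0..}. U_fun p * w + (1 - p) * exp (- w))"

end

theory Submission
  imports Defs "HOL-Library.FuncSet"
begin

text \<open>If \<open>m\<^sub>1 \<ge> 1\<close> the term \<open>m\<^sub>1/1\<close> alone gives \<open>A\<^sub>p(m) \<ge> 1\<close>. Otherwise the exponential term
  survives, and by the definition of \<open>U(p)\<close> each summand satisfies \<open>m\<^sub>i/i \<ge> U(p) m\<^sub>i a\<^sup>i\<^sub>p\<close>;
  hence \<open>A\<^sub>p(m) \<ge> U(p) w + q e\<^sup>-\<^sup>w\<close> with \<open>w = \<Sum> m\<^sub>i a\<^sup>i\<^sub>p \<ge> 0\<close>, which is at least \<open>c(p)\<close>.\<close>

lemma a_coef_pos: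
  assumes "0 < p" "p < 1" "i \<ge> 2"
  shows "a_coef p i > 0"
proof -
  have "0 < (1 - p) ^ (i - 1)" "(1 - p) ^ (i - 1) < 1"
    using assms by (simp_all add: power_less_one_iff)
  then have "ln (1 - (1 - p) ^ (i - 1)) < 0" by simp
  then show ?thesis unfolding a_coef_def by simp
qed

lemma U_fun_nonneg: "U_fun p \<ge> 0"
  unfolding U_fun_def by (rule cINF_greatest) auto

lemma U_fun_le_nat:
  assumes "0 < p" "p < 1" "i \<ge> 2"
  shows "U_fun p \<le> 1 / (real i * a_coef p i)"
proof -
  have "(1 - p) powr (real i - 1) = (1 - p) ^ (i - 1)"
    using assms by (simp add: powr_realpow[symmetric] of_nat_diff)
  moreover have "U_fun p \<le> 1 / (real i * \<bar>ln (1 - (1 - p) powr (real i - 1))\<bar>)"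
    unfolding U_fun_def
    by (rule cINF_lower) (auto intro!: bdd_belowI[where m=0] simp: assms)
  ultimately show ?thesis by (simp add: a_coef_def)
qed

lemma c_fun_le:
  assumes "p \<le> 1" "w \<ge> 0"
  shows "c_fun p \<le> U_fun p * w + (1 - p) * exp (- w)"
  unfolding c_fun_def
  by (rule cINF_lower) (use U_fun_nonneg[of p] assms in \<open>auto intro!: bdd_belowI[where m=0]\<close>)

lemma finite_admissible: "finite (admissible N)"
proof -
  have "(\<lambda>m. restrict m {1..N}) ` admissible N \<subseteq> PiE {1..N} (\<lambda>_. {0..N})"
    by (auto simp: admissible_def)
  then have "finite ((\<lambda>m. restrict m {1..N}) ` admissible N)"
    by (rule finite_subset) (auto intro: finite_PiE)
  moreover have "inj_on (\<lambda>m. restrict m {1..N}) (admissible N)"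
  proof (rule inj_onI, rule ext)
    fix x y i
    assume "x \<in> admissible N" "y \<in> admissible N" "restrict x {1..N} = restrict y {1..N}"
    then show "x i = y i"
      by (cases "i \<in> {1..N}") (auto dest: fun_cong[where x=i] simp: admissible_def)
  qed
  ultimately show ?thesis by (rule finite_imageD)
qed

lemma A_fun_ge_1_if_first_pos:
  assumes "N \<ge> 1" "m 1 \<noteq> 0"
  shows "A_fun p N m \<ge> 1"
proof -
  have "real (m 1) / real 1 \<le> (\<Sum>i=1..N. real (m i) / real i)"
    by (rule member_le_sum) (use assms in auto)
  with assms(2) show ?thesis unfolding A_fun_def by (simp add: power_0_left)
qed

lemma U_fun_mult_weight_le_sum:
  assumes "0 < p" "p < 1"
  shows "U_fun p * (\<Sum>i=2..N. real (m i) * a_coef p i) \<le> (\<Sum>i=2..N. real (m i) / real i)"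
  unfolding sum_distrib_left
proof (rule sum_mono)
  fix i assume "i \<in> {2..N}"
  then have i: "i \<ge> 2" by simp
  have a: "a_coef p i > 0" using a_coef_pos[OF assms i] .
  have "U_fun p * a_coef p i \<le> 1 / (real i * a_coef p i) * a_coef p i"
    using U_fun_le_nat[OF assms i] a by (intro mult_right_mono) auto
  also have "\<dots> = 1 / real i" using a by simp
  finally have "real (m i) * (U_fun p * a_coef p i) \<le> real (m i) * (1 / real i)"
    by (intro mult_left_mono) auto
  then show "U_fun p * (real (m i) * a_coef p i) \<le> real (m i) / real i"
    by (simp add: algebra_simps)
qed

lemma A_fun_ge_c_fun_if_first_zero:
  assumes "0 < p" "p < 1" "N \<ge> 1" "m 1 = 0"
  shows "A_fun p N m \<ge> c_fun p"
proof -
  define w where "w = (\<Sum>i=2..N. real (m i) * a_coef p i)"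
  have "w \<ge> 0"
    unfolding w_def using a_coef_pos[OF assms(1,2)] by (intro sum_nonneg) (simp add: less_imp_le)
  then have "c_fun p \<le> U_fun p * w + (1 - p) * exp (- w)"
    using c_fun_le assms(2) by simp
  also have "\<dots> \<le> (\<Sum>i=2..N. real (m i) / real i) + (1 - p) * exp (- w)"
    using U_fun_mult_weight_le_sum[OF assms(1,2)] unfolding w_def by simp
  also have "\<dots> = A_fun p N m"
    using assms(3,4) by (simp add: A_fun_def w_def sum.atLeast_Suc_atMost numeral_2_eq_2)
  finally show ?thesis .
qed

lemma A_fun_ge_min:
  assumes "0 < p" "p < 1" "N \<ge> 1"
  shows "A_fun p N m \<ge> min 1 (c_fun p)"
  using A_fun_ge_1_if_first_pos[OF assms(3)] A_fun_ge_c_fun_if_first_zero[OF assms]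
  by (cases "m 1 = 0") (auto simp: min.coboundedI1 min.coboundedI2)

theorem lemma3:
  fixes p :: real and N :: nat
  assumes "0 < p" "p < 1" "N \<ge> 2"
  shows "A_bar p N \<ge> min 1 (c_fun p)"
proof -
  have "(\<lambda>_. 0) \<in> admissible N" by (simp add: admissible_def)
  then show ?thesis
    unfolding A_bar_def using finite_admissible[of N] A_fun_ge_min[OF assms(1,2)] assms(3)
    by (subst Min_ge_iff) auto
qed

end
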